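(* Let $l\ge1$, let $f\in M_{2l}(SL(2,\mathbb Z))$ be a modular form of weight $2l$, and let $\mu$ be a partition of $n$ with $p(\mu)=l$. For partitions $\mu'$ of $n$ with $p(\mu')\ge l$ put $c_\mu=1$ and $c_{\mu'}=t^\mu_{\mu'}\prod_{t=0}^{p(\mu')-l-1}(2l+t)^{-1}$ for $p(\mu')>l$. Then the element \[ F(b)=\sum_{\mu':\,|\mu'|=n,\ p(\mu')\ge l}c_{\mu'}\,b_{-\mu'}\,f^{(p(\mu')-l)}(b)\in\mathscr D^{ch}(\mathbb H), \] whose term with $\mu'=\mu$ is $b_{-\mu}f(b)$, satisfies $\pi(g)F(b)=F(b)$ for all $g\in SL(2,\mathbb Z)$.
   Context: Let $\mathbb H$ be the upper half plane and $\mathcal O(\mathbb H)$ its ring of holomorphic functions. Let $V=\mathbb C[a_{-1},a_{-2},\dots,b_0,b_{-1},\dots]$ be the vacuum module of the Heisenberg Lie algebra $[a_m,b_n]=\delta_{m,-n}C$ (with $a_m1=0$ for $m\ge0$, $b_n1=0$ for $n>0$, $C=1$), a vertex algebra with fields $a(z)=\sum a_nz^{-n-1}$, $b(z)=\sum b_nz^{-n}$. Let $\mathscr D^{ch}(\mathbb H)=V\otimes_{\mathbb C[b_0]}\mathcal O(\mathbb H)$ ($b_0\mapsto\tau$, $b=b_0$), with $Y(f,z)=\sum_{i\ge0}\frac{f^{(i)}(b)}{i!}(\sum_{n\ne0}b_nz^{-n})^i$ for $f\in\mathcal O(\mathbb H)$. For a partition $\mu=(\mu_{(1)}\ge\dots\ge\mu_{(d)}\ge1)$,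 $p(\mu)=d$, $|\mu|=\sum\mu_{(i)}$ and $b_{-\mu}=b_{-\mu_{(1)}}\cdots b_{-\mu_{(d)}}$; $f^{(s)}$ is the $s$-th derivative. $SL(2,\mathbb R)$ acts on the right by vertex algebra automorphisms $\pi(g)$, integrating the zero modes of $E=-a_{-1}$, $F=a_{-1}b_0^2+2b_{-1}$, $H=-2a_{-1}b_0$ via $\pi(e^x)=\exp(-x_{(0)})$; for $g=\begin{pmatrix}\alpha&\beta\\\gamma&\delta\end{pmatrix}$, $\pi(g)a_{-1}=a_{-1}(\gamma b+\delta)^2+2\gamma^2b_{-1}$ and $\pi(g)f(b)=f(\frac{\alpha b+\beta}{\gamma b+\delta})$. For each partition $\mu$ there are unique constants $t^\mu_\nu$ (for partitions $\nu$ with $|\nu|=|\mu|$, $p(\nu)\ge p(\mu)$), independent of $g$, such that for all $g\in SL(2,\mathbb R)$, $\pi(g)(b_{-\mu}\cdot1)=\sum_{\nu:\,p(\nu)\ge p(\mu)}t^\mu_\nu(-\gamma)^{p(\nu)-p(\mu)}b_{-\nu}(\gamma b+\delta)^{-p(\mu)-p(\nu)}$. $M_{2l}(SL(2,\mathbb Z))$ is the space of holomorphic modular forms of weight $2l$ for $SL(2,\mathbb Z)$. *)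

theory Defs
  imports "HOL-Complex_Analysis.Complex_Analysis" "HOL-Library.Multiset"
begin

definition UHP :: "complex set" where
  "UHP = {z. Im z > 0}"

definition moeb :: "real \<Rightarrow> real \<Rightarrow> real \<Rightarrow> real \<Rightarrow> complex \<Rightarrow> complex" where
  "moeb a b c d z = (of_real a * z + of_real b) / (of_real c * z + of_real d)"

(* partitions = finite multisets of positive integers; |nu| = sum_mset nu, p(nu) = size nu *)
definition is_partition :: "nat multiset \<Rightarrow> bool" where
  "is_partition \<nu> \<longleftrightarrow> 0 \<notin># \<nu>"

definition modular_form :: "nat \<Rightarrow> (complex \<Rightarrow> complex) \<Rightarrow> bool" where
  "modular_form k f \<longleftrightarrow>
     f holomorphic_on UHP \<and>
     (\<forall>a b c d :: int. a * d - b * c = 1 \<longrightarrow>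
        (\<forall>z\<in>UHP. f (moeb (of_int a) (of_int b) (of_int c) (of_int d) z)
                    = (of_int c * z + of_int d) ^ k * f z)) \<and>
     (\<exists>M. \<forall>z. 1 \<le> Im z \<longrightarrow> norm (f z) \<le> M)"

(* Elements of the subalgebra of D^ch(H) spanned by the b_{-nu} f(b):
   X nu is the holomorphic coefficient of b_{-nu}, i.e. X = sum_nu b_{-nu} (X nu)(b). *)
type_synonym elt = "nat multiset \<Rightarrow> complex \<Rightarrow> complex"

definition unitE :: elt where
  "unitE \<nu> z = (if \<nu> = {#} then 1 else 0)"

(* product in the commutative algebra generated by the b_{-n} over O(H) *)
definition multE :: "elt \<Rightarrow> elt \<Rightarrow> elt" where
  "multE X Y \<nu> z = (\<Sum>A\<in>{A. A \<subseteq># \<nu>}. X A z * Y (\<nu> - A) z)"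

definition bmono :: "nat multiset \<Rightarrow> elt" where
  "bmono \<mu> \<nu> z = (if \<nu> = \<mu> then 1 else 0)"

(* pi(g)(b_{-j} 1) = T^j(pi(g) b)/j! = coefficient of z^j in
   Y(phi(b),z)1 = sum_i phi^(i)(b)/i! (sum_{m>0} b_{-m} z^m)^i, phi = Moebius map of g *)
definition bmode_image :: "real \<Rightarrow> real \<Rightarrow> real \<Rightarrow> real \<Rightarrow> nat \<Rightarrow> elt" where
  "bmode_image a b c d j \<nu> z =
     (if is_partition \<nu> \<and> \<nu> \<noteq> {#} \<and> sum_mset \<nu> = j
      then (deriv ^^ size \<nu>) (moeb a b c d) z /
           (\<Prod>k\<in>set_mset \<nu>. of_nat (fact (count \<nu> k)))
      else 0)"

(* pi(g)(b_{-mu} 1) = product of the pi(g)(b_{-mu_i} 1) *)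
definition bmono_image :: "real \<Rightarrow> real \<Rightarrow> real \<Rightarrow> real \<Rightarrow> nat multiset \<Rightarrow> elt" where
  "bmono_image a b c d \<mu> =
     foldr (\<lambda>j X. multE (bmode_image a b c d j) X) (sorted_list_of_multiset \<mu>) unitE"

(* pi(g) on the subalgebra: pi(g)(sum_rho b_{-rho} h_rho(b)) = sum_rho pi(g)(b_{-rho}1) h_rho(g b);
   pi(g) preserves conformal weight |rho| *)
definition piD :: "real \<Rightarrow> real \<Rightarrow> real \<Rightarrow> real \<Rightarrow> elt \<Rightarrow> elt" where
  "piD a b c d X \<nu> z =
     (\<Sum>\<rho>\<in>{\<rho>. is_partition \<rho> \<and> sum_mset \<rho> = sum_mset \<nu>}.
        bmono_image a b c d \<rho> \<nu> z * X \<rho> (moeb a b c d z))"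

definition tcoef :: "nat multiset \<Rightarrow> nat multiset \<Rightarrow> complex" where
  "tcoef \<mu> = (THE t.
     (\<forall>\<nu>. \<not> (is_partition \<nu> \<and> sum_mset \<nu> = sum_mset \<mu> \<and> size \<mu> \<le> size \<nu>) \<longrightarrow> t \<nu> = 0) \<and>
     (\<forall>a b c d :: real. a * d - b * c = 1 \<longrightarrow>
        (\<forall>\<nu>. \<forall>z\<in>UHP. piD a b c d (bmono \<mu>) \<nu> z =
           (if is_partition \<nu> \<and> sum_mset \<nu> = sum_mset \<mu> \<and> size \<mu> \<le> size \<nu>
            then t \<nu> * (- of_real c) ^ (size \<nu> - size \<mu>)
                 / (of_real c * z + of_real d) ^ (size \<mu> + size \<nu>)
            else 0))))"

definition ccoef :: "nat \<Rightarrow> nat multiset \<Rightarrow> nat multiset \<Rightarrow> complex" where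
  "ccoef l \<mu> \<nu> = (if \<nu> = \<mu> then 1
     else tcoef \<mu> \<nu> * (\<Prod>t<size \<nu> - l. 1 / of_nat (2 * l + t)))"

definition Fel :: "nat \<Rightarrow> (complex \<Rightarrow> complex) \<Rightarrow> nat multiset \<Rightarrow> elt" where
  "Fel l f \<mu> \<nu> z =
     (if is_partition \<nu> \<and> sum_mset \<nu> = sum_mset \<mu> \<and> l \<le> size \<nu>
      then ccoef l \<mu> \<nu> * (deriv ^^ (size \<nu> - l)) f z else 0)"

end

theory Submission
  imports Defs "HOL-Library.Poly_Mapping" "HOL-Combinatorics.Multiset_Permutations"
    "HOL-Computational_Algebra.Formal_Power_Series" "HOL-Computational_Algebra.Polynomial"
begin

(*
  Fix g and z, and put C = cz + d and x = -c/C. At the point z an element of the span of the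
  b_{-nu} f(b) is a polynomial in the b_{-m}. With B = Sum_{m>0} b_{-m} w^m, the Taylor
  expansion of the Moebius map at z gives pi(g) B = C^-2 B/(1 - xB), so pi(g) b_{-rho} is
  C^(-2 p(rho)) times a product of coefficients of B/(1 - xB); t^mu_nu is the coefficient of
  b_{-nu} in that product for x = 1, and c_mu' = t^mu_mu' / (2l)_(p(mu') - l).
  The substitutions B |-> B/(1 - sB) form a one-parameter group. Composing those for x and y - x
  and reading off the coefficient of b_{-nu} gives a polynomial identity in y. Differentiating
  f(gz) = C^(2l) f(z) k times gives
    C^(-2(l+k)) f^(k)(gz) / (2l)_k = Sum_j binom(k, j) (c/C)^(k-j) f^(j)(z) / (2l)_j,
  so applying y^j |-> f^(j)(z) / (2l)_j to that identity turns pi(g) F into F.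
*)

section \<open>Multisets, polynomial mappings and power series\<close>

lemma size_le_sum_mset_partition:
  assumes "is_partition \<nu>"
  shows "size \<nu> \<le> sum_mset \<nu>"
  using assms unfolding is_partition_def by (induction \<nu>) (auto simp: Suc_le_eq)

lemma partition_member_pos: "is_partition \<nu> \<Longrightarrow> m \<in># \<nu> \<Longrightarrow> 0 < m"
  unfolding is_partition_def by (cases m) auto

lemma partition_diff_single:
  assumes "is_partition \<nu>" and "m \<in># \<nu>"
  shows "is_partition (\<nu> - {#m#}) \<and> sum_mset (\<nu> - {#m#}) = sum_mset \<nu> - m \<and> 0 < m \<and> m \<le> sum_mset \<nu>"
  using assms sum_mset.remove[OF assms(2)] partition_member_pos[OF assms]
  by (auto simp: is_partition_def dest: in_diffD)

lemma finite_multisets_size_le: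
  assumes "finite A"
  shows "finite {\<nu>. set_mset \<nu> \<subseteq> A \<and> size \<nu> \<le> k}"
proof -
  have "{\<nu>. set_mset \<nu> \<subseteq> A \<and> size \<nu> \<le> k} = (\<Union>n\<le>k. multisets_of_size A n)"
    by (auto simp: multisets_of_size_def)
  then show ?thesis
    using assms by auto
qed

lemma finite_partitions: "finite {\<nu>. is_partition \<nu> \<and> sum_mset \<nu> = n}"
proof (rule finite_subset[OF _ finite_multisets_size_le[of "{..n}" n]])
  show "{\<nu>. is_partition \<nu> \<and> sum_mset \<nu> = n} \<subseteq> {\<nu>. set_mset \<nu> \<subseteq> {..n} \<and> size \<nu> \<le> n}"
    using size_le_sum_mset_partition by (auto dest!: multi_member_split)
qed simp

lemma finite_submultisets: "finite {A. A \<subseteq># \<nu>}"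
  by (rule finite_subset[OF _ finite_multisets_size_le[of "set_mset \<nu>" "size \<nu>"]])
     (auto simp: size_mset_mono mset_subset_eqD)

lemma card_permutations_of_multiset_remove_sum:
  assumes "A \<noteq> {#}"
  shows "card (permutations_of_multiset A)
    = (\<Sum>x\<in>set_mset A. card (permutations_of_multiset (A - {#x#})))"
  unfolding permutations_of_multiset_nonempty[OF assms]
  by (subst card_UN_disjoint) (auto simp: card_image)

lemma of_nat_card_permutations_of_multiset:
  "(of_nat (card (permutations_of_multiset A)) :: 'b::field_char_0)
    = of_nat (fact (size A)) / (\<Prod>x\<in>set_mset A. of_nat (fact (count A x)))"
proof -
  have "card (permutations_of_multiset A) * (\<Prod>x\<in>set_mset A. fact (count A x)) = fact (size A)"
    using card_permutations_of_multiset[of A] by simp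
  then have "(of_nat (card (permutations_of_multiset A)) :: 'b)
      * (\<Prod>x\<in>set_mset A. of_nat (fact (count A x))) = of_nat (fact (size A))"
    by (metis of_nat_mult of_nat_prod)
  moreover have "(\<Prod>x\<in>set_mset A. of_nat (fact (count A x)) :: 'b) \<noteq> 0"
    by (simp add: prod_zero_iff)
  ultimately show ?thesis
    by (simp add: eq_divide_eq)
qed

lemma lookup_times_multiset:
  fixes X Y :: "'a multiset \<Rightarrow>\<^sub>0 'b::semiring_0"
  shows "Poly_Mapping.lookup (X * Y) \<nu>
    = (\<Sum>A\<in>{A. A \<subseteq># \<nu>}. Poly_Mapping.lookup X A * Poly_Mapping.lookup Y (\<nu> - A))"
proof -
  have inner: "Sum_any (\<lambda>q. Poly_Mapping.lookup Y q when \<nu> = A + q)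
      = (Poly_Mapping.lookup Y (\<nu> - A) when A \<subseteq># \<nu>)" for A
  proof (cases "A \<subseteq># \<nu>")
    case True
    then have "\<nu> = A + q \<longleftrightarrow> q = \<nu> - A" for q
      by auto
    with True show ?thesis
      by simp
  next
    case False
    then have "\<nu> \<noteq> A + q" for q
      by auto
    with False show ?thesis
      by simp
  qed
  have "Poly_Mapping.lookup (X * Y) \<nu>
      = Sum_any (\<lambda>A. Poly_Mapping.lookup X A * Poly_Mapping.lookup Y (\<nu> - A) when A \<in> {A. A \<subseteq># \<nu>})"
    by (simp add: lookup_mult inner mult_when)
  then show ?thesis
    by (simp add: Sum_any.conditionalize[OF finite_submultisets] when_def)
qed

lemma lookup_single_zero_times:
  fixes p :: "'a::monoid_add \<Rightarrow>\<^sub>0 'b::semiring_0"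
  shows "Poly_Mapping.lookup (Poly_Mapping.single 0 c * p) k = c * Poly_Mapping.lookup p k"
  by (simp flip: mult_map_scale_conv_mult add: map.rep_eq when_def)

lemma single_zero_power:
  "(Poly_Mapping.single 0 c :: 'a::comm_monoid_add \<Rightarrow>\<^sub>0 'b::comm_semiring_1) ^ n
    = Poly_Mapping.single 0 (c ^ n)"
  by (induction n) (simp_all add: mult_single)

lemma sum_single_lookup: "(\<Sum>\<rho>\<in>Poly_Mapping.keys X. Poly_Mapping.single \<rho> (Poly_Mapping.lookup X \<rho>)) = X"
  by (rule poly_mapping_eqI)
     (simp add: lookup_sum lookup_single when_def sum.delta' in_keys_iff)

lemma fps_fixpoint_unique:
  fixes A Y X X' :: "'a::comm_ring fps"
  assumes "Y $ 0 = 0" and "X = A + Y * X" and "X' = A + Y * X'"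
  shows "X = X'"
proof -
  define D where "D = X - X'"
  have D: "D = Y * D"
    using assms(2,3) unfolding D_def by (metis add_diff_cancel_left right_diff_distrib)
  have "D $ n = 0" for n
  proof (induction n rule: less_induct)
    case (less n)
    have "D $ n = (Y * D) $ n"
      using D by (rule arg_cong)
    also have "\<dots> = (\<Sum>i=0..n. Y $ i * D $ (n - i))"
      by (rule fps_mult_nth)
    also have "\<dots> = 0"
    proof (intro sum.neutral ballI)
      fix i
      assume "i \<in> {0..n}"
      then show "Y $ i * D $ (n - i) = 0"
        using less assms(1) by (cases "i = 0") auto
    qed
    finally show ?case .
  qed
  then show ?thesis
    unfolding D_def by (simp add: fps_ext)
qed

definition fps_map :: "('a \<Rightarrow> 'b) \<Rightarrow> 'a fps \<Rightarrow> 'b fps" where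
  "fps_map \<phi> F = Abs_fps (\<lambda>n. \<phi> (F $ n))"

lemma fps_map_nth [simp]: "fps_map \<phi> F $ n = \<phi> (F $ n)"
  by (simp add: fps_map_def)

lemma fps_map_add:
  assumes "\<And>x y. \<phi> (x + y) = \<phi> x + \<phi> y"
  shows "fps_map \<phi> (F + G) = fps_map \<phi> F + fps_map \<phi> G"
  by (rule fps_ext) (simp add: assms)

lemma fps_map_mult:
  assumes "\<phi> 0 = 0" and "\<And>x y. \<phi> (x + y) = \<phi> x + \<phi> y" and "\<And>x y. \<phi> (x * y) = \<phi> x * \<phi> y"
  shows "fps_map \<phi> (F * G) = fps_map \<phi> F * fps_map \<phi> G"
proof (rule fps_ext)
  fix n
  have "\<phi> (\<Sum>i=0..n. F $ i * G $ (n - i)) = (\<Sum>i=0..n. \<phi> (F $ i) * \<phi> (G $ (n - i)))"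
    by (simp add: assms(3) flip: sum_comp_morphism[of \<phi>, OF assms(1,2)])
  then show "fps_map \<phi> (F * G) $ n = (fps_map \<phi> F * fps_map \<phi> G) $ n"
    by (simp add: fps_mult_nth)
qed

lemma fps_map_const:
  assumes "\<phi> 0 = 0"
  shows "fps_map \<phi> (fps_const c) = fps_const (\<phi> c)"
  by (rule fps_ext) (simp add: assms)

lemma coeff_linear_power:
  fixes a :: "'a::comm_semiring_1"
  shows "coeff ([:a, 1:] ^ n) i = of_nat (n choose i) * a ^ (n - i)"
proof (cases "i \<le> n")
  case True
  then show ?thesis
    by (simp add: coeff_linear_poly_power)
next
  case False
  have "degree ([:a, 1:] ^ n) \<le> n"
    using degree_power_le[of "[:a, 1:]" n] by simp
  with False show ?thesis
    by (simp add: coeff_eq_0 binomial_eq_0)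
qed

section \<open>The substitutions \<open>B \<mapsto> B / (1 - s B)\<close>\<close>

(* the value at a fixed point of an element of type elt: the coefficient of b_{-nu} sits at nu *)
type_synonym bpoly = "nat multiset \<Rightarrow>\<^sub>0 complex"

definition bvar :: "nat \<Rightarrow> bpoly" where
  "bvar m = Poly_Mapping.single {#m#} 1"

lemma lookup_bvar_times:
  "Poly_Mapping.lookup (bvar m * X) \<nu>
    = (if m \<in># \<nu> then Poly_Mapping.lookup X (\<nu> - {#m#}) else 0)"
proof -
  have "Poly_Mapping.lookup (bvar m * X) \<nu>
      = (\<Sum>A\<in>{A. A \<subseteq># \<nu>}. if A = {#m#} then Poly_Mapping.lookup X (\<nu> - A) else 0)"
    unfolding lookup_times_multiset bvar_def lookup_single when_def by (intro sum.cong) auto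
  then show ?thesis
    by (simp add: sum.delta[OF finite_submultisets])
qed

(*
  The coefficient of w^j in B/(1 - sB) = Sum_i s^(i-1) B^i, where B = Sum_{m>0} b_{-m} w^m:
  the coefficient of b_{-nu} w^j in B^(size nu) counts the orderings of nu.
*)
definition geom_coeff :: "complex \<Rightarrow> nat \<Rightarrow> bpoly" where
  "geom_coeff s j = Abs_poly_mapping (\<lambda>\<nu>.
     if is_partition \<nu> \<and> \<nu> \<noteq> {#} \<and> sum_mset \<nu> = j
     then of_nat (card (permutations_of_multiset \<nu>)) * s ^ (size \<nu> - 1) else 0)"

lemma lookup_geom_coeff:
  "Poly_Mapping.lookup (geom_coeff s j) \<nu> =
     (if is_partition \<nu> \<and> \<nu> \<noteq> {#} \<and> sum_mset \<nu> = j
      then of_nat (card (permutations_of_multiset \<nu>)) * s ^ (size \<nu> - 1) else 0)"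
  unfolding geom_coeff_def
  by (subst lookup_Abs_poly_mapping) (auto intro: finite_subset[OF _ finite_partitions[of j]])

lemma lookup_geom_coeff_scale:
  "Poly_Mapping.lookup (geom_coeff s j) \<nu> = Poly_Mapping.lookup (geom_coeff 1 j) \<nu> * s ^ (size \<nu> - 1)"
  by (simp add: lookup_geom_coeff)

lemma geom_coeff_0 [simp]: "geom_coeff s 0 = 0"
proof (rule poly_mapping_eqI)
  fix \<nu>
  have "\<nu> = {#}" if "is_partition \<nu>" "sum_mset \<nu> = 0"
    using size_le_sum_mset_partition[OF that(1)] that(2) by (metis le_zero_eq size_eq_0_iff_empty)
  then show "Poly_Mapping.lookup (geom_coeff s 0) \<nu> = Poly_Mapping.lookup 0 \<nu>"
    by (auto simp: lookup_geom_coeff)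
qed

lemma sum_lookup_geom_coeff_diff_single:
  assumes "is_partition \<nu>" and "sum_mset \<nu> = j" and "2 \<le> size \<nu>"
  shows "(\<Sum>m\<in>set_mset \<nu>. if 0 < m \<and> m \<le> j
            then Poly_Mapping.lookup (geom_coeff s (j - m)) (\<nu> - {#m#}) else 0)
    = of_nat (card (permutations_of_multiset \<nu>)) * s ^ (size \<nu> - 2)"
proof -
  have "Poly_Mapping.lookup (geom_coeff s (j - m)) (\<nu> - {#m#})
      = of_nat (card (permutations_of_multiset (\<nu> - {#m#}))) * s ^ (size \<nu> - 2)"
    if "m \<in># \<nu>" for m
  proof -
    have "size (\<nu> - {#m#}) = size \<nu> - 1"
      using that by (simp add: size_Diff_singleton)
    then have "\<nu> - {#m#} \<noteq> {#}" and "size (\<nu> - {#m#}) - 1 = size \<nu> - 2"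
      using assms(3) by auto
    then show ?thesis
      using partition_diff_single[OF assms(1) that] assms(2) by (simp add: lookup_geom_coeff)
  qed
  then have "(\<Sum>m\<in>set_mset \<nu>. if 0 < m \<and> m \<le> j
               then Poly_Mapping.lookup (geom_coeff s (j - m)) (\<nu> - {#m#}) else 0)
      = (\<Sum>m\<in>set_mset \<nu>. of_nat (card (permutations_of_multiset (\<nu> - {#m#})))) * s ^ (size \<nu> - 2)"
    using partition_diff_single[OF assms(1)] assms(2) by (simp add: sum_distrib_right)
  also have "\<dots> = of_nat (card (permutations_of_multiset \<nu>)) * s ^ (size \<nu> - 2)"
    using assms(3) by (simp add: card_permutations_of_multiset_remove_sum[of \<nu>] nonempty_has_size)
  finally show ?thesis .
qed

lemma lookup_geom_coeff_diff_single_eq_0: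
  assumes "\<not> (is_partition \<nu> \<and> \<nu> \<noteq> {#} \<and> sum_mset \<nu> = j)"
    and m: "m \<in># \<nu>" "0 < m" "m \<le> j"
  shows "Poly_Mapping.lookup (geom_coeff s (j - m)) (\<nu> - {#m#}) = 0"
proof (rule ccontr)
  assume "Poly_Mapping.lookup (geom_coeff s (j - m)) (\<nu> - {#m#}) \<noteq> 0"
  then have "is_partition (\<nu> - {#m#})" and "sum_mset (\<nu> - {#m#}) = j - m"
    by (auto simp: lookup_geom_coeff split: if_splits)
  moreover have "sum_mset \<nu> = m + sum_mset (\<nu> - {#m#})"
    by (rule sum_mset.remove[OF m(1)])
  ultimately have "is_partition \<nu> \<and> \<nu> \<noteq> {#} \<and> sum_mset \<nu> = j"
    using m by (auto simp: is_partition_def in_diff_count)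
  with assms(1) show False ..
qed

lemma lookup_geom_coeff_rec:
  "Poly_Mapping.lookup (geom_coeff s j) \<nu> = (if 0 < j \<and> \<nu> = {#j#} then 1 else 0)
     + s * (\<Sum>m\<in>set_mset \<nu>. if 0 < m \<and> m \<le> j
                             then Poly_Mapping.lookup (geom_coeff s (j - m)) (\<nu> - {#m#}) else 0)"
proof (cases "is_partition \<nu> \<and> \<nu> \<noteq> {#} \<and> sum_mset \<nu> = j")
  case True
  then have part: "is_partition \<nu>" and ne: "\<nu> \<noteq> {#}" and sum: "sum_mset \<nu> = j"
    by auto
  show ?thesis
  proof (cases "size \<nu> = 1")
    case True
    then obtain y where "\<nu> = {#y#}"
      by (metis size_1_singleton_mset)
    then show ?thesis
      using part sum partition_member_pos[OF part] by (simp add: lookup_geom_coeff)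
  next
    case False
    with ne have size: "2 \<le> size \<nu>"
      by (cases "size \<nu>") auto
    then have "\<nu> \<noteq> {#j#}"
      by auto
    then show ?thesis
      using True size power_Suc[of s "size \<nu> - 2"]
      by (simp add: sum_lookup_geom_coeff_diff_single[OF part sum size] lookup_geom_coeff
          Suc_diff_Suc numeral_2_eq_2 mult_ac)
  qed
next
  case False
  have "(\<Sum>m\<in>set_mset \<nu>. if 0 < m \<and> m \<le> j
            then Poly_Mapping.lookup (geom_coeff s (j - m)) (\<nu> - {#m#}) else 0) = 0"
    by (rule sum.neutral) (simp add: lookup_geom_coeff_diff_single_eq_0[OF False])
  moreover have "\<not> (0 < j \<and> \<nu> = {#j#})"
    using False by (auto simp: is_partition_def)
  moreover have "Poly_Mapping.lookup (geom_coeff s j) \<nu> = 0"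
    unfolding lookup_geom_coeff by (rule if_not_P[OF False])
  ultimately show ?thesis
    by simp
qed

definition bseries :: "bpoly fps" where
  "bseries = Abs_fps (\<lambda>m. if m = 0 then 0 else bvar m)"

definition geom_series :: "complex \<Rightarrow> bpoly fps" where
  "geom_series s = Abs_fps (geom_coeff s)"

lemma geom_series_nth [simp]: "geom_series s $ n = geom_coeff s n"
  by (simp add: geom_series_def Abs_fps_inverse)

lemma lookup_bseries_times_nth:
  "Poly_Mapping.lookup ((bseries * F) $ j) \<nu>
    = (\<Sum>m\<in>set_mset \<nu>. if 0 < m \<and> m \<le> j
                       then Poly_Mapping.lookup (F $ (j - m)) (\<nu> - {#m#}) else 0)"
proof -
  have "Poly_Mapping.lookup ((bseries * F) $ j) \<nu> = (\<Sum>m=0..j.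
      if 0 < m \<and> m \<in># \<nu> then Poly_Mapping.lookup (F $ (j - m)) (\<nu> - {#m#}) else 0)"
    by (auto simp: fps_mult_nth lookup_sum bseries_def lookup_bvar_times intro!: sum.cong)
  also have "\<dots> = (\<Sum>m\<in>{m\<in>set_mset \<nu>. 0 < m \<and> m \<le> j}.
      Poly_Mapping.lookup (F $ (j - m)) (\<nu> - {#m#}))"
    by (subst sum.inter_filter[symmetric]) (auto intro!: sum.cong)
  also have "\<dots> = (\<Sum>m\<in>set_mset \<nu>. if 0 < m \<and> m \<le> j
                       then Poly_Mapping.lookup (F $ (j - m)) (\<nu> - {#m#}) else 0)"
    by (simp add: sum.inter_filter)
  finally show ?thesis .
qed

lemma geom_series_fixpoint:
  "geom_series s = bseries + fps_const (Poly_Mapping.single 0 s) * bseries * geom_series s"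
proof (intro fps_ext poly_mapping_eqI)
  fix j \<nu>
  have "Poly_Mapping.lookup (bseries $ j) \<nu> = (if 0 < j \<and> \<nu> = {#j#} then 1 else 0)"
    by (auto simp: bseries_def bvar_def lookup_single when_def)
  moreover have "Poly_Mapping.lookup ((bseries * geom_series s) $ j) \<nu> = (\<Sum>m\<in>set_mset \<nu>.
      if 0 < m \<and> m \<le> j then Poly_Mapping.lookup (geom_coeff s (j - m)) (\<nu> - {#m#}) else 0)"
    by (simp add: lookup_bseries_times_nth cong: if_cong)
  ultimately show "Poly_Mapping.lookup (geom_series s $ j) \<nu>
      = Poly_Mapping.lookup ((bseries + fps_const (Poly_Mapping.single 0 s) * bseries * geom_series s) $ j) \<nu>"
    by (simp add: mult.assoc lookup_add lookup_single_zero_times lookup_geom_coeff_rec[of s j \<nu>])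
qed

lemma geom_series_add:
  "geom_series (s + t)
    = geom_series t + fps_const (Poly_Mapping.single 0 s) * geom_series t * geom_series (s + t)"
proof -
  define S T where "S = fps_const (Poly_Mapping.single 0 s :: bpoly)"
    and "T = fps_const (Poly_Mapping.single 0 t :: bpoly)"
  define B G Gt where "B = bseries" and "G = geom_series (s + t)" and "Gt = geom_series t"
  have G: "G = B + (S + T) * B * G"
    using geom_series_fixpoint[of "s + t"] by (simp add: S_def T_def B_def G_def single_add)
  have Gt: "Gt = B + T * B * Gt"
    using geom_series_fixpoint[of t] by (simp add: T_def B_def Gt_def)
  \<comment> \<open>both sides solve \<open>X = B + S B G + T B X\<close>\<close>
  have "G = Gt + S * Gt * G"
  proof (rule fps_fixpoint_unique[where A = "B + S * B * G" and Y = "T * B"])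
    show "(T * B) $ 0 = 0"
      by (simp add: B_def bseries_def)
    have "G = B + (S + T) * B * G"
      by (fact G)
    also have "\<dots> = B + S * B * G + T * B * G"
      by (simp add: algebra_simps)
    finally show "G = B + S * B * G + T * B * G" .
    have "B + S * B * G + T * B * (Gt + S * Gt * G) = (B + T * B * Gt) + S * G * (B + T * B * Gt)"
      by (simp add: algebra_simps)
    also have "\<dots> = Gt + S * G * Gt"
      by (simp only: Gt[symmetric])
    also have "\<dots> = Gt + S * Gt * G"
      by (simp add: mult_ac)
    finally show "Gt + S * Gt * G = B + S * B * G + T * B * (Gt + S * Gt * G)" ..
  qed
  then show ?thesis
    by (simp add: S_def G_def Gt_def)
qed

definition geom_monomial :: "complex \<Rightarrow> nat multiset \<Rightarrow> bpoly" where
  "geom_monomial s \<rho> = (\<Prod>r\<in>#\<rho>. geom_coeff s r)"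

lemma geom_monomial_empty [simp]: "geom_monomial s {#} = 1"
  by (simp add: geom_monomial_def)

lemma geom_monomial_add_mset [simp]:
  "geom_monomial s (add_mset r \<rho>) = geom_coeff s r * geom_monomial s \<rho>"
  by (simp add: geom_monomial_def)

lemma geom_monomial_union: "geom_monomial s (A + B) = geom_monomial s A * geom_monomial s B"
  by (simp add: geom_monomial_def)

(* the algebra endomorphism b_{-m} |-> geom_coeff t m, i.e. B |-> B/(1 - tB) *)
definition geom_subst :: "complex \<Rightarrow> bpoly \<Rightarrow> bpoly" where
  "geom_subst t X = (\<Sum>\<rho>\<in>Poly_Mapping.keys X.
     Poly_Mapping.single 0 (Poly_Mapping.lookup X \<rho>) * geom_monomial t \<rho>)"

lemma geom_subst_eq_sum:
  assumes "finite S" and "Poly_Mapping.keys X \<subseteq> S"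
  shows "geom_subst t X
    = (\<Sum>\<rho>\<in>S. Poly_Mapping.single 0 (Poly_Mapping.lookup X \<rho>) * geom_monomial t \<rho>)"
  unfolding geom_subst_def using assms by (intro sum.mono_neutral_left) (auto simp: in_keys_iff)

lemma geom_subst_add: "geom_subst t (X + Y) = geom_subst t X + geom_subst t Y"
proof -
  let ?S = "Poly_Mapping.keys X \<union> Poly_Mapping.keys Y"
  have "geom_subst t (X + Y)
      = (\<Sum>\<rho>\<in>?S. Poly_Mapping.single 0 (Poly_Mapping.lookup (X + Y) \<rho>) * geom_monomial t \<rho>)"
    by (rule geom_subst_eq_sum) (auto simp: keys_add)
  also have "\<dots> = geom_subst t X + geom_subst t Y"
    by (simp add: geom_subst_eq_sum[of ?S] lookup_add single_add distrib_right sum.distrib)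
  finally show ?thesis .
qed

lemma geom_subst_zero [simp]: "geom_subst t 0 = 0"
  by (simp add: geom_subst_def)

lemma geom_subst_sum: "geom_subst t (\<Sum>i\<in>I. X i) = (\<Sum>i\<in>I. geom_subst t (X i))"
  by (induction I rule: infinite_finite_induct) (auto simp: geom_subst_add)

lemma geom_subst_single:
  "geom_subst t (Poly_Mapping.single \<rho> c) = Poly_Mapping.single 0 c * geom_monomial t \<rho>"
  by (cases "c = 0") (simp_all add: geom_subst_def)

lemma geom_subst_mult: "geom_subst t (X * Y) = geom_subst t X * geom_subst t Y"
proof -
  let ?c = "\<lambda>Z \<rho>. Poly_Mapping.single 0 (Poly_Mapping.lookup Z \<rho>) :: bpoly"
  have "X * Y = (\<Sum>\<alpha>\<in>Poly_Mapping.keys X. \<Sum>\<beta>\<in>Poly_Mapping.keys Y.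
      Poly_Mapping.single (\<alpha> + \<beta>) (Poly_Mapping.lookup X \<alpha> * Poly_Mapping.lookup Y \<beta>))"
    by (subst (1 2) sum_single_lookup[symmetric]) (simp add: sum_product mult_single)
  then have "geom_subst t (X * Y) = (\<Sum>\<alpha>\<in>Poly_Mapping.keys X. \<Sum>\<beta>\<in>Poly_Mapping.keys Y.
      (?c X \<alpha> * geom_monomial t \<alpha>) * (?c Y \<beta> * geom_monomial t \<beta>))"
    by (simp add: geom_subst_sum geom_subst_single geom_monomial_union mult_single algebra_simps)
  also have "\<dots> = geom_subst t X * geom_subst t Y"
    by (simp add: geom_subst_def sum_product)
  finally show ?thesis .
qed

lemma geom_subst_const: "geom_subst t (Poly_Mapping.single 0 c) = Poly_Mapping.single 0 c"
  by (simp add: geom_subst_single)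

lemma geom_subst_one [simp]: "geom_subst t 1 = 1"
  using geom_subst_const[of t 1] by simp

lemma geom_subst_bvar: "geom_subst t (bvar m) = geom_coeff t m"
  by (simp add: bvar_def geom_subst_single)

lemma geom_subst_geom_coeff: "geom_subst t (geom_coeff s j) = geom_coeff (s + t) j"
proof -
  let ?M = "fps_map (geom_subst t)"
  let ?S = "fps_const (Poly_Mapping.single 0 s) :: bpoly fps"
  have "?M bseries = geom_series t"
    by (rule fps_ext) (simp add: bseries_def geom_subst_bvar)
  moreover have "?M ?S = ?S"
    by (simp add: fps_map_const geom_subst_const)
  ultimately have "?M (geom_series s) = geom_series t + ?S * geom_series t * ?M (geom_series s)"
    using arg_cong[where f = ?M, OF geom_series_fixpoint[of s]]
    by (simp add: fps_map_add fps_map_mult geom_subst_add geom_subst_mult)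
  \<comment> \<open>so \<open>?M (geom_series s)\<close> and \<open>geom_series (s + t)\<close> solve the same fixpoint equation\<close>
  then have "?M (geom_series s) = geom_series (s + t)"
    using fps_fixpoint_unique[where Y = "?S * geom_series t", OF _ _ geom_series_add] by simp
  then show ?thesis
    using fps_map_nth[of "geom_subst t" "geom_series s" j] by simp
qed

lemma geom_subst_geom_monomial: "geom_subst t (geom_monomial s \<mu>) = geom_monomial (s + t) \<mu>"
  by (induction \<mu>) (simp_all add: geom_subst_mult geom_subst_geom_coeff)

lemma lookup_geom_monomial_add_mset:
  "Poly_Mapping.lookup (geom_monomial s (add_mset x \<mu>)) \<nu> = (\<Sum>A\<in>{A. A \<subseteq># \<nu>}.
     Poly_Mapping.lookup (geom_coeff s x) A * Poly_Mapping.lookup (geom_monomial s \<mu>) (\<nu> - A))"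
  by (simp add: lookup_times_multiset)

lemma geom_monomial_support:
  assumes "Poly_Mapping.lookup (geom_monomial s \<mu>) \<nu> \<noteq> 0"
  shows "is_partition \<mu> \<and> is_partition \<nu> \<and> sum_mset \<nu> = sum_mset \<mu> \<and> size \<mu> \<le> size \<nu>"
  using assms
proof (induction \<mu> arbitrary: \<nu>)
  case empty
  then show ?case
    by (simp add: lookup_one when_def is_partition_def split: if_splits)
next
  case (add x \<mu>)
  obtain A where A: "A \<subseteq># \<nu>"
    and nz: "Poly_Mapping.lookup (geom_coeff s x) A * Poly_Mapping.lookup (geom_monomial s \<mu>) (\<nu> - A) \<noteq> 0"
    using add.prems unfolding lookup_geom_monomial_add_mset by (auto elim: sum.not_neutral_contains_not_neutral)
  then have "is_partition A" "A \<noteq> {#}" "sum_mset A = x"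
    by (auto simp: lookup_geom_coeff split: if_splits)
  moreover have "0 < size A"
    using \<open>A \<noteq> {#}\<close> by (simp add: nonempty_has_size)
  moreover note size_le_sum_mset_partition[OF \<open>is_partition A\<close>]
  moreover have "is_partition \<mu> \<and> is_partition (\<nu> - A) \<and> sum_mset (\<nu> - A) = sum_mset \<mu>
      \<and> size \<mu> \<le> size (\<nu> - A)"
    using nz by (intro add.IH) auto
  moreover have split: "\<nu> = A + (\<nu> - A)"
    using A by simp
  moreover have "size \<nu> = size A + size (\<nu> - A)"
    using A by (simp add: size_Diff_submset size_mset_mono)
  moreover have "sum_mset \<nu> = sum_mset A + sum_mset (\<nu> - A)"
    by (subst split) (simp del: subset_mset.add_diff_inverse)
  moreover have "is_partition \<nu> \<longleftrightarrow> is_partition A \<and> is_partition (\<nu> - A)"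
    by (subst split) (simp add: is_partition_def del: subset_mset.add_diff_inverse)
  ultimately show ?case
    by (auto simp: is_partition_def)
qed

lemma lookup_geom_monomial_scale:
  "Poly_Mapping.lookup (geom_monomial s \<mu>) \<nu>
    = Poly_Mapping.lookup (geom_monomial 1 \<mu>) \<nu> * s ^ (size \<nu> - size \<mu>)"
proof (induction \<mu> arbitrary: \<nu>)
  case empty
  then show ?case
    by (simp add: lookup_one when_def)
next
  case (add x \<mu>)
  have pointwise: "Poly_Mapping.lookup (geom_coeff s x) A * Poly_Mapping.lookup (geom_monomial s \<mu>) (\<nu> - A)
      = Poly_Mapping.lookup (geom_coeff 1 x) A * Poly_Mapping.lookup (geom_monomial 1 \<mu>) (\<nu> - A)
        * s ^ (size \<nu> - size (add_mset x \<mu>))"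
    if A: "A \<subseteq># \<nu>" for A
  proof (cases "Poly_Mapping.lookup (geom_coeff 1 x) A * Poly_Mapping.lookup (geom_monomial 1 \<mu>) (\<nu> - A) = 0")
    case True
    then show ?thesis
      by (auto simp: lookup_geom_coeff_scale[of s] add.IH)
  next
    case False
    then have "A \<noteq> {#}" and "size \<mu> \<le> size (\<nu> - A)"
      by (auto simp: lookup_geom_coeff dest: geom_monomial_support)
    moreover have "size \<nu> = size A + size (\<nu> - A)"
      using A by (simp add: size_Diff_submset size_mset_mono)
    ultimately have "size A - 1 + (size (\<nu> - A) - size \<mu>) = size \<nu> - size (add_mset x \<mu>)"
      by (simp add: nonempty_has_size)
    then show ?thesis
      by (simp add: lookup_geom_coeff_scale[of s] add.IH power_add[symmetric] mult_ac)
  qed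
  show ?case
    unfolding lookup_geom_monomial_add_mset sum_distrib_right by (rule sum.cong) (simp_all add: pointwise)
qed

lemma lookup_geom_monomial_diag:
  assumes "is_partition \<mu>"
  shows "Poly_Mapping.lookup (geom_monomial s \<mu>) \<mu> = 1"
  using assms
proof (induction \<mu>)
  case empty
  then show ?case
    by (simp add: lookup_one)
next
  case (add x \<mu>)
  have other: "Poly_Mapping.lookup (geom_coeff s x) A
      * Poly_Mapping.lookup (geom_monomial s \<mu>) (add_mset x \<mu> - A) = 0"
    if A: "A \<subseteq># add_mset x \<mu>" "A \<noteq> {#x#}" for A
  proof (rule ccontr)
    assume nz: "\<not> ?thesis"
    then have "A \<noteq> {#}" "sum_mset A = x"
      by (auto simp: lookup_geom_coeff split: if_splits)
    moreover have "size \<mu> \<le> size (add_mset x \<mu> - A)"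
      using nz geom_monomial_support by auto
    moreover have "size (add_mset x \<mu> - A) = size \<mu> + 1 - size A" "size A \<le> size \<mu> + 1"
      using A by (auto simp: size_Diff_submset dest: size_mset_mono)
    ultimately have "size A = 1"
      by (simp add: nonempty_has_size)
    then obtain y where "A = {#y#}"
      by (metis size_1_singleton_mset)
    then show False
      using A \<open>sum_mset A = x\<close> by simp
  qed
  have "Poly_Mapping.lookup (geom_monomial s (add_mset x \<mu>)) (add_mset x \<mu>)
      = Poly_Mapping.lookup (geom_coeff s x) {#x#} * Poly_Mapping.lookup (geom_monomial s \<mu>) \<mu>"
    unfolding lookup_geom_monomial_add_mset
    by (subst sum.remove[of _ "{#x#}"]) (auto simp: finite_submultisets other intro!: sum.neutral)
  also have "\<dots> = 1"
    using add.prems partition_member_pos[OF add.prems] add.IH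
    by (simp add: lookup_geom_coeff is_partition_def)
  finally show ?case .
qed

lemma lookup_geom_subst:
  "Poly_Mapping.lookup (geom_subst t X) \<nu> = (\<Sum>\<rho> | is_partition \<rho> \<and> sum_mset \<rho> = sum_mset \<nu>.
     Poly_Mapping.lookup X \<rho> * Poly_Mapping.lookup (geom_monomial t \<rho>) \<nu>)"
proof -
  let ?P = "{\<rho>. is_partition \<rho> \<and> sum_mset \<rho> = sum_mset \<nu>}"
  have "Poly_Mapping.lookup (geom_subst t X) \<nu> = (\<Sum>\<rho>\<in>Poly_Mapping.keys X \<union> ?P.
      Poly_Mapping.lookup X \<rho> * Poly_Mapping.lookup (geom_monomial t \<rho>) \<nu>)"
    by (simp add: geom_subst_eq_sum[of "Poly_Mapping.keys X \<union> ?P"] finite_partitions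
        lookup_sum lookup_single_zero_times)
  also have "\<dots> = (\<Sum>\<rho>\<in>?P. Poly_Mapping.lookup X \<rho> * Poly_Mapping.lookup (geom_monomial t \<rho>) \<nu>)"
    by (rule sum.mono_neutral_right) (auto simp: finite_partitions dest: geom_monomial_support)
  finally show ?thesis .
qed

(* the group law of geom_subst at the coefficient of b_{-nu}, as a polynomial identity in y *)
lemma geom_monomial_binomial_identity:
  "(\<Sum>\<rho> | is_partition \<rho> \<and> sum_mset \<rho> = sum_mset \<nu>.
      smult (Poly_Mapping.lookup (geom_monomial 1 \<mu>) \<rho> * Poly_Mapping.lookup (geom_monomial x \<rho>) \<nu>)
        ([:- x, 1:] ^ (size \<rho> - size \<mu>)))
    = monom (Poly_Mapping.lookup (geom_monomial 1 \<mu>) \<nu>) (size \<nu> - size \<mu>)"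
    (is "?lhs = ?rhs")
proof -
  have "poly ?lhs y = poly ?rhs y" for y
  proof -
    have "poly ?lhs y = (\<Sum>\<rho> | is_partition \<rho> \<and> sum_mset \<rho> = sum_mset \<nu>.
        Poly_Mapping.lookup (geom_monomial (y - x) \<mu>) \<rho> * Poly_Mapping.lookup (geom_monomial x \<rho>) \<nu>)"
      by (simp add: poly_sum lookup_geom_monomial_scale[of "y - x"] mult_ac)
    also have "\<dots> = Poly_Mapping.lookup (geom_monomial y \<mu>) \<nu>"
      by (simp add: lookup_geom_subst[symmetric] geom_subst_geom_monomial)
    also have "\<dots> = poly ?rhs y"
      by (simp add: lookup_geom_monomial_scale[of y] poly_monom)
    finally show ?thesis .
  qed
  then show ?thesis
    by (simp add: poly_eq_poly_eq_iff[symmetric] fun_eq_iff)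
qed

section \<open>The action of \<open>SL(2, \<real>)\<close> on monomials\<close>

lemma open_UHP: "open UHP"
  unfolding UHP_def by (rule open_halfspace_Im_gt)

lemma moeb_denom_nonzero:
  assumes "a * d - b * c = 1" and "z \<in> UHP"
  shows "of_real c * z + of_real d \<noteq> (0::complex)"
proof
  assume denom: "of_real c * z + of_real d = 0"
  then have "Im (of_real c * z + of_real d) = 0"
    by simp
  then have "c = 0"
    using assms(2) by (simp add: UHP_def)
  with denom assms(1) show False
    by simp
qed

lemma moeb_in_UHP:
  assumes "a * d - b * c = 1" and "z \<in> UHP"
  shows "moeb a b c d z \<in> UHP"
proof -
  let ?C = "of_real c * z + of_real d :: complex"
  have "Im (of_real a * z + of_real b) * Re ?C - Re (of_real a * z + of_real b) * Im ?C
      = (a * d - b * c) * Im z"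
    by (simp add: algebra_simps)
  moreover have "0 < (Re ?C)\<^sup>2 + (Im ?C)\<^sup>2"
    using moeb_denom_nonzero[OF assms] by (simp add: sum_power2_gt_zero_iff complex_eq_iff)
  ultimately show ?thesis
    using assms unfolding UHP_def moeb_def by (simp add: Im_divide)
qed

lemma moeb_has_field_derivative:
  assumes "a * d - b * c = 1" and "of_real c * z + of_real d \<noteq> 0"
  shows "(moeb a b c d has_field_derivative 1 / (of_real c * z + of_real d) ^ 2) (at z)"
proof -
  have "(moeb a b c d has_field_derivative (of_real a * (of_real c * z + of_real d)
      - (of_real a * z + of_real b) * of_real c) / (of_real c * z + of_real d) ^ 2) (at z)"
    unfolding moeb_def[abs_def] using assms(2)
    by (auto intro!: derivative_eq_intros simp: power2_eq_square)
  moreover have "of_real a * (of_real c * z + of_real d) - (of_real a * z + of_real b) * of_real c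
      = (of_real (a * d - b * c) :: complex)"
    by (simp add: algebra_simps)
  ultimately show ?thesis
    using assms(1) by simp
qed

lemma has_field_derivative_div_linear_power:
  fixes \<gamma> \<delta> K z :: complex
  assumes "\<gamma> * z + \<delta> \<noteq> 0"
  shows "((\<lambda>w. K / (\<gamma> * w + \<delta>) ^ n) has_field_derivative
     - K * of_nat n * \<gamma> / (\<gamma> * z + \<delta>) ^ (n + 1)) (at z)"
proof (cases n)
  case 0
  then show ?thesis
    by simp
next
  case (Suc m)
  show ?thesis
    using assms unfolding Suc by (rule_tac derivative_eq_intros refl | simp)+
qed

lemma higher_deriv_moeb:
  assumes det: "a * d - b * c = 1" and p: "1 \<le> p" and denom: "of_real c * z + of_real d \<noteq> 0"
  shows "(deriv ^^ p) (moeb a b c d) z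
    = fact p * (- of_real c) ^ (p - 1) / (of_real c * z + of_real d) ^ (p + 1)"
  using p denom
proof (induction p arbitrary: z rule: nat_induct_at_least)
  case base
  then show ?case
    using DERIV_imp_deriv[OF moeb_has_field_derivative[OF det]] by (simp add: power2_eq_square)
next
  case (Suc p)
  let ?g = "\<lambda>w. fact p * (- of_real c) ^ (p - 1) / (of_real c * w + of_real d :: complex) ^ (p + 1)"
  have "- (fact p * (- of_real c) ^ (p - 1)) * of_nat (p + 1) * of_real c
      = (fact (Suc p) * (- of_real c) ^ p :: complex)"
    using Suc.hyps by (cases p) (simp_all add: algebra_simps)
  then have "(?g has_field_derivative
      fact (Suc p) * (- of_real c) ^ p / (of_real c * z + of_real d) ^ (p + 1 + 1)) (at z)"
    using has_field_derivative_div_linear_power[OF Suc.prems, of "fact p * (- of_real c) ^ (p - 1)" "p + 1"]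
    by (simp only:)
  moreover have "open {w::complex. of_real c * w + of_real d \<noteq> 0}"
    by (intro open_Collect_neq continuous_intros)
  ultimately have "((deriv ^^ p) (moeb a b c d) has_field_derivative
      fact (Suc p) * (- of_real c) ^ p / (of_real c * z + of_real d) ^ (p + 1 + 1)) (at z)"
    using Suc.IH Suc.prems by (auto intro: has_field_derivative_transform_within_open)
  then show ?case
    by (simp add: DERIV_imp_deriv)
qed

lemma bmode_image_eq:
  assumes det: "a * d - b * c = 1" and denom: "of_real c * z + of_real d \<noteq> (0::complex)"
  shows "bmode_image a b c d j \<nu> z = Poly_Mapping.lookup (Poly_Mapping.single 0 (1 / (of_real c * z + of_real d) ^ 2)
      * geom_coeff (- of_real c / (of_real c * z + of_real d)) j) \<nu>"
proof (cases "is_partition \<nu> \<and> \<nu> \<noteq> {#} \<and> sum_mset \<nu> = j")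
  case True
  let ?C = "of_real c * z + of_real d :: complex"
  have p: "1 \<le> size \<nu>"
    using True by (simp add: Suc_le_eq nonempty_has_size)
  have key: "u ^ (size \<nu> - 1) / ?C ^ (size \<nu> + 1) = 1 / ?C ^ 2 * (u / ?C) ^ (size \<nu> - 1)" for u
    using p by (cases "size \<nu>") (simp_all add: power_divide power2_eq_square)
  have "bmode_image a b c d j \<nu> z = fact (size \<nu>) * ((- of_real c) ^ (size \<nu> - 1) / ?C ^ (size \<nu> + 1))
      / (\<Prod>k\<in>set_mset \<nu>. of_nat (fact (count \<nu> k)))"
    using True by (simp add: bmode_image_def higher_deriv_moeb[OF det p denom])
  also have "\<dots> = 1 / ?C ^ 2 * (of_nat (card (permutations_of_multiset \<nu>)) * (- of_real c / ?C) ^ (size \<nu> - 1))"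
    unfolding key of_nat_card_permutations_of_multiset by simp
  finally show ?thesis
    using True by (simp add: lookup_single_zero_times lookup_geom_coeff)
next
  case False
  have "bmode_image a b c d j \<nu> z = 0"
    unfolding bmode_image_def by (rule if_not_P[OF False])
  moreover have "Poly_Mapping.lookup (geom_coeff (- of_real c / (of_real c * z + of_real d)) j) \<nu> = 0"
    unfolding lookup_geom_coeff by (rule if_not_P[OF False])
  ultimately show ?thesis
    by (simp add: lookup_single_zero_times)
qed

lemma bmono_image_eq:
  assumes det: "a * d - b * c = 1" and denom: "of_real c * z + of_real d \<noteq> (0::complex)"
  shows "bmono_image a b c d \<rho> \<nu> z = (1 / (of_real c * z + of_real d) ^ 2) ^ size \<rho>
    * Poly_Mapping.lookup (geom_monomial (- of_real c / (of_real c * z + of_real d)) \<rho>) \<nu>"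
proof -
  define k x where "k = 1 / (of_real c * z + of_real d) ^ 2" and "x = - of_real c / (of_real c * z + of_real d)"
  let ?g = "\<lambda>j. Poly_Mapping.single 0 k * geom_coeff x j"
  have "foldr (\<lambda>j X. multE (bmode_image a b c d j) X) xs unitE \<nu> z
      = Poly_Mapping.lookup (\<Prod>j\<leftarrow>xs. ?g j) \<nu>" for xs \<nu>
  proof (induction xs arbitrary: \<nu>)
    case Nil
    then show ?case
      by (simp add: unitE_def lookup_one when_def)
  next
    case (Cons j xs)
    then show ?case
      by (simp add: multE_def lookup_times_multiset bmode_image_eq[OF det denom] k_def x_def)
  qed
  moreover have "(\<Prod>j\<leftarrow>sorted_list_of_multiset \<rho>. ?g j) = (\<Prod>j\<in>#\<rho>. ?g j)"
    by (metis mset_map mset_sorted_list_of_multiset prod_mset_prod_list)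
  moreover have "(\<Prod>j\<in>#\<rho>. ?g j) = Poly_Mapping.single 0 k ^ size \<rho> * geom_monomial x \<rho>"
    by (induction \<rho>) (simp_all add: mult_ac)
  ultimately show ?thesis
    unfolding bmono_image_def by (simp add: single_zero_power lookup_single_zero_times k_def x_def)
qed

lemma piD_bmono:
  "piD a b c d (bmono \<mu>) \<nu> z
    = (if is_partition \<mu> \<and> sum_mset \<mu> = sum_mset \<nu> then bmono_image a b c d \<mu> \<nu> z else 0)"
proof -
  have "piD a b c d (bmono \<mu>) \<nu> z = (\<Sum>\<rho>\<in>{\<rho>. is_partition \<rho> \<and> sum_mset \<rho> = sum_mset \<nu>}.
      if \<mu> = \<rho> then bmono_image a b c d \<rho> \<nu> z else 0)"
    unfolding piD_def bmono_def by (intro sum.cong) auto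
  then show ?thesis
    by (simp add: sum.delta'[OF finite_partitions])
qed

lemma piD_bmono_eq:
  assumes det: "a * d - b * c = 1" and z: "z \<in> UHP" and "is_partition \<mu>"
  shows "piD a b c d (bmono \<mu>) \<nu> z =
    (if is_partition \<nu> \<and> sum_mset \<nu> = sum_mset \<mu> \<and> size \<mu> \<le> size \<nu>
     then Poly_Mapping.lookup (geom_monomial 1 \<mu>) \<nu> * (- of_real c) ^ (size \<nu> - size \<mu>)
          / (of_real c * z + of_real d) ^ (size \<mu> + size \<nu>)
     else 0)"
proof -
  define C x where "C = of_real c * z + of_real d" and "x = - of_real c / C"
  let ?T = "Poly_Mapping.lookup (geom_monomial 1 \<mu>) \<nu>"
  have piD: "piD a b c d (bmono \<mu>) \<nu> z = (if sum_mset \<mu> = sum_mset \<nu>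
      then (1 / C ^ 2) ^ size \<mu> * (?T * x ^ (size \<nu> - size \<mu>)) else 0)"
    using assms(3)
    by (simp add: piD_bmono bmono_image_eq[OF det moeb_denom_nonzero[OF det z], folded C_def x_def]
        lookup_geom_monomial_scale[of x \<mu>])
  have "(1 / C ^ 2) ^ m * (u / C) ^ k = u ^ k / C ^ (m + (m + k))" for m k u
    by (simp add: power_divide power_add power_mult_distrib divide_divide_eq_left
        power2_eq_square power_mult[symmetric] mult_ac)
  then have pow: "(1 / C ^ 2) ^ m * x ^ k = (- of_real c) ^ k / C ^ (m + (m + k))" for m k
    unfolding x_def .
  show ?thesis
  proof (cases "is_partition \<nu> \<and> sum_mset \<nu> = sum_mset \<mu> \<and> size \<mu> \<le> size \<nu>")
    case True
    then have "piD a b c d (bmono \<mu>) \<nu> z = ?T * ((1 / C ^ 2) ^ size \<mu> * x ^ (size \<nu> - size \<mu>))"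
      using piD by (simp add: mult_ac)
    also have "\<dots> = ?T * (- of_real c) ^ (size \<nu> - size \<mu>) / C ^ (size \<mu> + size \<nu>)"
      using True pow[of "size \<mu>" "size \<nu> - size \<mu>"] by simp
    finally show ?thesis
      using True by (simp add: C_def)
  next
    case False
    then have "?T = 0"
      using geom_monomial_support by blast
    with False piD show ?thesis
      by auto
  qed
qed

lemma tcoef_eq:
  assumes "is_partition \<mu>"
  shows "tcoef \<mu> = Poly_Mapping.lookup (geom_monomial 1 \<mu>)"
  unfolding tcoef_def
proof (rule the_equality, goal_cases)
  case 1
  show ?case
    using piD_bmono_eq[OF _ _ assms] geom_monomial_support by blast
next
  case (2 t)
  show ?case
  proof
    fix \<nu>
    show "t \<nu> = Poly_Mapping.lookup (geom_monomial 1 \<mu>) \<nu>"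
    proof (cases "is_partition \<nu> \<and> sum_mset \<nu> = sum_mset \<mu> \<and> size \<mu> \<le> size \<nu>")
      case True
      \<comment> \<open>compare both characterisations at \<open>g = (1, 0; -1, 1)\<close> and \<open>z = \<i>\<close>\<close>
      have i: "\<i> \<in> UHP"
        by (simp add: UHP_def)
      have "(of_real (-1) * \<i> + of_real 1 :: complex) \<noteq> 0"
        by (simp add: complex_eq_iff)
      then have nz: "(of_real (-1) * \<i> + of_real 1 :: complex) ^ (size \<mu> + size \<nu>) \<noteq> 0"
        by (rule power_not_zero)
      have "t \<nu> * (- of_real (-1)) ^ (size \<nu> - size \<mu>) / (of_real (-1) * \<i> + of_real 1) ^ (size \<mu> + size \<nu>)
          = piD 1 0 (-1) 1 (bmono \<mu>) \<nu> \<i>"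
        using 2 True i by auto
      also have "\<dots> = Poly_Mapping.lookup (geom_monomial 1 \<mu>) \<nu> * (- of_real (-1)) ^ (size \<nu> - size \<mu>)
          / (of_real (-1) * \<i> + of_real 1) ^ (size \<mu> + size \<nu>)"
        using piD_bmono_eq[where a = 1 and b = 0 and c = "-1" and d = 1, OF _ i assms] True by simp
      finally show ?thesis
        using nz by simp
    next
      case False
      then have "t \<nu> = 0"
        using 2 by blast
      moreover have "Poly_Mapping.lookup (geom_monomial 1 \<mu>) \<nu> = 0"
        using False geom_monomial_support by blast
      ultimately show ?thesis
        by simp
    qed
  qed
qed

lemma ccoef_eq:
  assumes "is_partition \<mu>" and "size \<mu> = l"
  shows "ccoef l \<mu> \<rho>
    = Poly_Mapping.lookup (geom_monomial 1 \<mu>) \<rho> / pochhammer (of_nat (2 * l)) (size \<rho> - l)"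
proof (cases "\<rho> = \<mu>")
  case True
  then show ?thesis
    using assms by (simp add: ccoef_def lookup_geom_monomial_diag)
next
  case False
  have "(\<Prod>t<k. 1 / (of_nat (2 * l + t) :: complex)) = 1 / pochhammer (of_nat (2 * l)) k" for k
    by (simp add: pochhammer_prod atLeast0LessThan prod_dividef)
  with False show ?thesis
    by (simp add: ccoef_def tcoef_eq[OF assms(1)])
qed

lemma Fel_eq:
  assumes "is_partition \<mu>" and "size \<mu> = l"
  shows "Fel l f \<mu> \<nu> z = Poly_Mapping.lookup (geom_monomial 1 \<mu>) \<nu> * (deriv ^^ (size \<nu> - l)) f z
    / pochhammer (of_nat (2 * l)) (size \<nu> - l)"
proof (cases "is_partition \<nu> \<and> sum_mset \<nu> = sum_mset \<mu> \<and> l \<le> size \<nu>")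
  case True
  then show ?thesis
    by (simp add: Fel_def ccoef_eq[OF assms])
next
  case False
  then have "Poly_Mapping.lookup (geom_monomial 1 \<mu>) \<nu> = 0"
    using assms(2) geom_monomial_support by blast
  then show ?thesis
    unfolding Fel_def if_not_P[OF False] by simp
qed

section \<open>Derivatives of modular forms\<close>

definition bol_coeff :: "nat \<Rightarrow> nat \<Rightarrow> nat \<Rightarrow> complex" where
  "bol_coeff l k j = of_nat (k choose j) * pochhammer (of_nat (2 * l + j)) (k - j)"

lemma bol_coeff_Suc:
  assumes "j \<le> Suc k"
  shows "bol_coeff l (Suc k) j
    = of_nat (2 * l + k + j) * bol_coeff l k j + (if j = 0 then 0 else bol_coeff l k (j - 1))"
proof (cases j)
  case 0
  then show ?thesis
    by (simp add: bol_coeff_def pochhammer_rec' algebra_simps)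
next
  case (Suc i)
  show ?thesis
  proof (cases "i = k")
    case True
    then show ?thesis
      using Suc by (simp add: bol_coeff_def)
  next
    case False
    then have ik: "i < k"
      using assms Suc by simp
    define m where "m = k - Suc i"
    have km: "k - i = Suc m"
      using ik unfolding m_def by simp
    define Q :: complex where "Q = pochhammer (of_nat (2 * l + Suc i)) m"
    have p1: "pochhammer (of_nat (2 * l + Suc i)) (Suc m) = of_nat (2 * l + k) * Q"
      unfolding Q_def pochhammer_rec' using ik by (simp add: m_def algebra_simps)
    have p2: "pochhammer (of_nat (2 * l + i)) (Suc m) = of_nat (2 * l + i) * Q"
      unfolding Q_def pochhammer_rec by (simp add: algebra_simps)
    have "(k choose i) * (k - i) = (k choose Suc i) * Suc i"
      by (metis binomial_absorb_comp binomial_absorption mult.commute)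
    then have binom: "(of_nat (k choose i) :: complex) * (of_nat k - of_nat i)
        = of_nat (k choose Suc i) * (of_nat i + 1)"
      using ik by (metis of_nat_Suc of_nat_diff of_nat_mult add.commute less_imp_le_nat)
    have "bol_coeff l (Suc k) j = (of_nat (k choose Suc i) + of_nat (k choose i)) * (of_nat (2 * l + k) * Q)"
      unfolding bol_coeff_def Suc using km p1 by simp
    also have "\<dots> = of_nat (2 * l + k + j) * (of_nat (k choose Suc i) * Q)
        + of_nat (k choose i) * (of_nat (2 * l + i) * Q)"
      using binom unfolding Suc by (simp only: of_nat_add of_nat_mult of_nat_Suc) algebra
    also have "\<dots> = of_nat (2 * l + k + j) * bol_coeff l k j + (if j = 0 then 0 else bol_coeff l k (j - 1))"
      unfolding bol_coeff_def Suc using km p2 by (simp add: m_def Q_def)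
    finally show ?thesis .
  qed
qed

lemma sum_bol_coeff_Suc:
  "(\<Sum>j\<le>Suc k. bol_coeff l (Suc k) j * X j)
    = (\<Sum>j\<le>k. bol_coeff l k j * (of_nat (2 * l + k + j) * X j + X (Suc j)))"
proof -
  have "(\<Sum>j\<le>Suc k. bol_coeff l (Suc k) j * X j)
      = (\<Sum>j\<le>Suc k. of_nat (2 * l + k + j) * bol_coeff l k j * X j)
        + (\<Sum>j\<le>Suc k. (if j = 0 then 0 else bol_coeff l k (j - 1)) * X j)"
    by (simp add: bol_coeff_Suc algebra_simps sum.distrib)
  also have "(\<Sum>j\<le>Suc k. of_nat (2 * l + k + j) * bol_coeff l k j * X j)
      = (\<Sum>j\<le>k. of_nat (2 * l + k + j) * bol_coeff l k j * X j)"
    by (simp add: bol_coeff_def)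
  also have "(\<Sum>j\<le>Suc k. (if j = 0 then 0 else bol_coeff l k (j - 1)) * X j)
      = (\<Sum>j\<le>k. bol_coeff l k j * X (Suc j))"
    by (subst sum.atMost_Suc_shift) simp
  finally show ?thesis
    by (simp add: sum.distrib algebra_simps)
qed

lemma bol_coeff_sum_Suc:
  fixes C c :: complex and F :: "nat \<Rightarrow> complex"
  shows "C\<^sup>2 * (\<Sum>j\<le>k. bol_coeff l k j * c ^ (k - j) * (of_nat (2 * l + k + j) * c * C ^ (2 * l + k + j - 1) * F j
            + C ^ (2 * l + k + j) * F (Suc j)))
     = (\<Sum>j\<le>Suc k. bol_coeff l (Suc k) j * c ^ (Suc k - j) * C ^ (2 * l + Suc k + j) * F j)"
proof -
  define X where "X j = c ^ (Suc k - j) * C ^ (2 * l + Suc k + j) * F j" for j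
  have "(\<Sum>j\<le>Suc k. bol_coeff l (Suc k) j * c ^ (Suc k - j) * C ^ (2 * l + Suc k + j) * F j)
      = (\<Sum>j\<le>k. of_nat (2 * l + k + j) * bol_coeff l k j * X j + bol_coeff l k j * X (Suc j))"
    using sum_bol_coeff_Suc[of l k X] by (simp add: X_def algebra_simps)
  also have "\<dots> = C\<^sup>2 * (\<Sum>j\<le>k. bol_coeff l k j * c ^ (k - j) * (of_nat (2 * l + k + j) * c * C ^ (2 * l + k + j - 1) * F j
            + C ^ (2 * l + k + j) * F (Suc j)))"
    unfolding sum_distrib_left
  proof (intro sum.cong refl)
    fix j
    assume "j \<in> {..k}"
    define n where "n = 2 * l + k + j"
    have c: "c ^ (Suc k - j) = c ^ (k - j) * c"
      using \<open>j \<in> {..k}\<close> by (simp add: Suc_diff_le)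
    have C1: "C ^ (2 * l + Suc k + j) = C ^ (n + 1)" and C2: "C ^ (2 * l + Suc k + Suc j) = C ^ n * C\<^sup>2"
      by (simp_all add: n_def power2_eq_square)
    have n: "of_nat n * C ^ (n + 1) = of_nat n * C ^ (n - 1) * C\<^sup>2"
      by (cases n) (simp_all add: power2_eq_square)
    have "of_nat n * bol_coeff l k j * X j = bol_coeff l k j * c ^ (k - j) * c * F j * (of_nat n * C ^ (n + 1))"
      unfolding X_def c C1 by (simp add: algebra_simps)
    also have "\<dots> = bol_coeff l k j * c ^ (k - j) * c * F j * (of_nat n * C ^ (n - 1) * C\<^sup>2)"
      by (simp only: n)
    also have "\<dots> = C\<^sup>2 * (bol_coeff l k j * c ^ (k - j) * (of_nat n * c * C ^ (n - 1) * F j))"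
      by (simp add: algebra_simps)
    finally have "of_nat n * bol_coeff l k j * X j
        = C\<^sup>2 * (bol_coeff l k j * c ^ (k - j) * (of_nat n * c * C ^ (n - 1) * F j))" .
    moreover have "bol_coeff l k j * X (Suc j) = C\<^sup>2 * (bol_coeff l k j * c ^ (k - j) * (C ^ n * F (Suc j)))"
      unfolding X_def C2 by (simp add: mult_ac)
    ultimately show "of_nat (2 * l + k + j) * bol_coeff l k j * X j + bol_coeff l k j * X (Suc j)
        = C\<^sup>2 * (bol_coeff l k j * c ^ (k - j) * (of_nat (2 * l + k + j) * c * C ^ (2 * l + k + j - 1) * F j
            + C ^ (2 * l + k + j) * F (Suc j)))"
      unfolding n_def by (simp add: algebra_simps)
  qed
  finally show ?thesis
    by simp
qed

lemma higher_deriv_modular: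
  fixes a b c d :: real
  assumes det: "a * d - b * c = 1" and hol: "f holomorphic_on UHP"
    and modf: "\<And>z. z \<in> UHP \<Longrightarrow> f (moeb a b c d z) = (of_real c * z + of_real d) ^ (2 * l) * f z"
    and z: "z \<in> UHP"
  shows "(deriv ^^ k) f (moeb a b c d z) = (\<Sum>j\<le>k. bol_coeff l k j * of_real c ^ (k - j)
      * (of_real c * z + of_real d) ^ (2 * l + k + j) * (deriv ^^ j) f z)"
  using z
proof (induction k arbitrary: z)
  case 0
  then show ?case
    using modf by (simp add: bol_coeff_def)
next
  case (Suc k)
  let ?C = "\<lambda>w. of_real c * w + of_real d :: complex"
  let ?R = "\<lambda>w. \<Sum>j\<le>k. bol_coeff l k j * of_real c ^ (k - j) * ?C w ^ (2 * l + k + j) * (deriv ^^ j) f w"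
  let ?R' = "\<Sum>j\<le>k. bol_coeff l k j * of_real c ^ (k - j) * (of_nat (2 * l + k + j) * of_real c
      * ?C z ^ (2 * l + k + j - 1) * (deriv ^^ j) f z + ?C z ^ (2 * l + k + j) * (deriv ^^ Suc j) f z)"
  have deriv_f: "((deriv ^^ j) f has_field_derivative (deriv ^^ Suc j) f w) (at w)" if "w \<in> UHP" for j w
    using holomorphic_derivI[OF holomorphic_higher_deriv[OF hol open_UHP] open_UHP that] by simp
  have "(?R has_field_derivative ?R') (at z)"
    using deriv_f[OF Suc.prems] by (auto intro!: derivative_eq_intros simp: algebra_simps)
  then have "((\<lambda>w. (deriv ^^ k) f (moeb a b c d w)) has_field_derivative ?R') (at z)"
    by (rule has_field_derivative_transform_within_open[OF _ open_UHP Suc.prems]) (simp add: Suc.IH)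
  moreover have "((\<lambda>w. (deriv ^^ k) f (moeb a b c d w)) has_field_derivative
      (deriv ^^ Suc k) f (moeb a b c d z) * (1 / ?C z ^ 2)) (at z)"
    by (rule DERIV_chain2[OF deriv_f[OF moeb_in_UHP[OF det Suc.prems]]
          moeb_has_field_derivative[OF det moeb_denom_nonzero[OF det Suc.prems]]])
  ultimately have "(deriv ^^ Suc k) f (moeb a b c d z) * (1 / ?C z ^ 2) = ?R'"
    by (rule DERIV_unique[rotated])
  then have "(deriv ^^ Suc k) f (moeb a b c d z) = (?C z)\<^sup>2 * ?R'"
    using moeb_denom_nonzero[OF det Suc.prems] by (simp add: field_simps)
  also have "\<dots> = (\<Sum>j\<le>Suc k. bol_coeff l (Suc k) j * of_real c ^ (Suc k - j)
      * ?C z ^ (2 * l + Suc k + j) * (deriv ^^ j) f z)"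
    by (rule bol_coeff_sum_Suc)
  finally show ?case .
qed

lemma bol_coeff_div_pochhammer:
  assumes "0 < l" and "j \<le> k"
  shows "bol_coeff l k j / pochhammer (of_nat (2 * l)) k
    = of_nat (k choose j) / pochhammer (of_nat (2 * l)) j"
proof -
  have "pochhammer (of_nat (2 * l) :: complex) k
      = pochhammer (of_nat (2 * l)) j * pochhammer (of_nat (2 * l + j)) (k - j)"
    using pochhammer_product[OF assms(2), of "of_nat (2 * l) :: complex"] by simp
  moreover have "pochhammer (of_nat (2 * l + j) :: complex) (k - j) \<noteq> 0"
    using pochhammer_pos[of "2 * l + j" "k - j"] assms(1)
    by (simp only: pochhammer_of_nat of_nat_eq_0_iff) simp
  ultimately show ?thesis
    by (simp add: bol_coeff_def)
qed

lemma power_div_square_cancel: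
  fixes C c :: "'a::field"
  assumes "C \<noteq> 0" and "j \<le> k"
  shows "(1 / C ^ 2) ^ (l + k) * c ^ (k - j) * C ^ (2 * l + k + j) = (c / C) ^ (k - j)"
proof -
  have "(1 / C ^ 2) ^ (l + k) = 1 / C ^ (2 * (l + k))"
    by (simp add: power_one_over flip: power_mult)
  also have "2 * (l + k) = (2 * l + k + j) + (k - j)"
    using assms(2) by simp
  finally have "(1 / C ^ 2) ^ (l + k) = 1 / (C ^ (2 * l + k + j) * C ^ (k - j))"
    by (simp only: power_add)
  then show ?thesis
    using assms(1) by (simp add: power_divide field_simps)
qed

lemma higher_deriv_modular_normalized:
  fixes a b c d :: real
  assumes det: "a * d - b * c = 1" and hol: "f holomorphic_on UHP"
    and modf: "\<And>z. z \<in> UHP \<Longrightarrow> f (moeb a b c d z) = (of_real c * z + of_real d) ^ (2 * l) * f z"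
    and l: "0 < l" and z: "z \<in> UHP"
  shows "(1 / (of_real c * z + of_real d) ^ 2) ^ (l + k) * (deriv ^^ k) f (moeb a b c d z)
      / pochhammer (of_nat (2 * l)) k
    = (\<Sum>j\<le>k. of_nat (k choose j) * (of_real c / (of_real c * z + of_real d)) ^ (k - j)
      * ((deriv ^^ j) f z / pochhammer (of_nat (2 * l)) j))"
proof -
  define C where "C = of_real c * z + of_real d"
  have "(deriv ^^ k) f (moeb a b c d z)
      = (\<Sum>j\<le>k. bol_coeff l k j * of_real c ^ (k - j) * C ^ (2 * l + k + j) * (deriv ^^ j) f z)"
    unfolding C_def by (rule higher_deriv_modular[OF det hol modf z])
  then have "(1 / C ^ 2) ^ (l + k) * (deriv ^^ k) f (moeb a b c d z) / pochhammer (of_nat (2 * l)) k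
      = (\<Sum>j\<le>k. ((1 / C ^ 2) ^ (l + k) * of_real c ^ (k - j) * C ^ (2 * l + k + j))
          * (bol_coeff l k j / pochhammer (of_nat (2 * l)) k) * (deriv ^^ j) f z)"
    by (simp add: sum_distrib_left sum_divide_distrib mult_ac)
  also have "\<dots> = (\<Sum>j\<le>k. of_nat (k choose j) * (of_real c / C) ^ (k - j)
      * ((deriv ^^ j) f z / pochhammer (of_nat (2 * l)) j))"
  proof (intro sum.cong refl)
    fix j
    assume "j \<in> {..k}"
    then have j: "j \<le> k"
      by simp
    have C: "C \<noteq> 0"
      unfolding C_def by (rule moeb_denom_nonzero[OF det z])
    show "(1 / C ^ 2) ^ (l + k) * of_real c ^ (k - j) * C ^ (2 * l + k + j)
        * (bol_coeff l k j / pochhammer (of_nat (2 * l)) k) * (deriv ^^ j) f z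
      = of_nat (k choose j) * (of_real c / C) ^ (k - j) * ((deriv ^^ j) f z / pochhammer (of_nat (2 * l)) j)"
      by (simp only: power_div_square_cancel[OF C j] bol_coeff_div_pochhammer[OF l j]) simp
  qed
  finally show ?thesis
    unfolding C_def .
qed

section \<open>Invariance of \<open>F\<close>\<close>

lemma bmono_image_times_Fel:
  fixes a b c d :: real
  assumes det: "a * d - b * c = 1" and hol: "f holomorphic_on UHP"
    and modf: "\<And>z. z \<in> UHP \<Longrightarrow> f (moeb a b c d z) = (of_real c * z + of_real d) ^ (2 * l) * f z"
    and l: "0 < l" and \<mu>: "is_partition \<mu>" "size \<mu> = l" and z: "z \<in> UHP"
  shows "bmono_image a b c d \<rho> \<nu> z * Fel l f \<mu> \<rho> (moeb a b c d z)
    = Poly_Mapping.lookup (geom_monomial 1 \<mu>) \<rho>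
      * Poly_Mapping.lookup (geom_monomial (- (of_real c / (of_real c * z + of_real d))) \<rho>) \<nu>
      * (\<Sum>j\<le>size \<rho> - l. of_nat ((size \<rho> - l) choose j)
          * (of_real c / (of_real c * z + of_real d)) ^ (size \<rho> - l - j)
          * ((deriv ^^ j) f z / pochhammer (of_nat (2 * l)) j))"
proof (cases "l \<le> size \<rho>")
  case False
  then have "Poly_Mapping.lookup (geom_monomial 1 \<mu>) \<rho> = 0"
    using geom_monomial_support \<mu>(2) by fastforce
  then show ?thesis
    by (simp add: Fel_eq[OF \<mu>])
next
  case True
  define C k where "C = of_real c * z + of_real d" and "k = size \<rho> - l"
  have size: "size \<rho> = l + k"
    using True by (simp add: k_def)
  have "bmono_image a b c d \<rho> \<nu> z * Fel l f \<mu> \<rho> (moeb a b c d z)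
      = Poly_Mapping.lookup (geom_monomial 1 \<mu>) \<rho> * Poly_Mapping.lookup (geom_monomial (- (of_real c / C)) \<rho>) \<nu>
        * ((1 / C ^ 2) ^ (l + k) * (deriv ^^ k) f (moeb a b c d z) / pochhammer (of_nat (2 * l)) k)"
    by (simp add: bmono_image_eq[OF det moeb_denom_nonzero[OF det z], folded C_def] Fel_eq[OF \<mu>] size)
  also have "(1 / C ^ 2) ^ (l + k) * (deriv ^^ k) f (moeb a b c d z) / pochhammer (of_nat (2 * l)) k
      = (\<Sum>j\<le>k. of_nat (k choose j) * (of_real c / C) ^ (k - j)
          * ((deriv ^^ j) f z / pochhammer (of_nat (2 * l)) j))"
    unfolding C_def by (rule higher_deriv_modular_normalized[OF det hol modf l z])
  finally show ?thesis
    by (simp only: C_def k_def)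
qed

lemma piD_Fel_eq:
  fixes a b c d :: real
  assumes det: "a * d - b * c = 1" and hol: "f holomorphic_on UHP"
    and modf: "\<And>z. z \<in> UHP \<Longrightarrow> f (moeb a b c d z) = (of_real c * z + of_real d) ^ (2 * l) * f z"
    and l: "0 < l" and \<mu>: "is_partition \<mu>" "size \<mu> = l" and z: "z \<in> UHP"
  shows "piD a b c d (Fel l f \<mu>) \<nu> z = Fel l f \<mu> \<nu> z"
proof -
  define u where "u = of_real c / (of_real c * z + of_real d)"
  define P where "P = {\<rho>. is_partition \<rho> \<and> sum_mset \<rho> = sum_mset \<nu>}"
  define T where "T \<rho> = Poly_Mapping.lookup (geom_monomial 1 \<mu>) \<rho>" for \<rho>
  define h where "h j = (deriv ^^ j) f z / pochhammer (of_nat (2 * l)) j" for j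
  \<comment> \<open>\<open>L\<close> evaluates a polynomial in \<open>y\<close> by \<open>y ^ j \<mapsto> h j\<close>; \<open>N\<close> bounds all degrees that occur\<close>
  define N where "N = size \<nu> + sum_mset \<nu>"
  define L where "L p = (\<Sum>j\<le>N. coeff p j * h j)" for p :: "complex poly"
  have summand: "bmono_image a b c d \<rho> \<nu> z * Fel l f \<mu> \<rho> (moeb a b c d z)
      = T \<rho> * Poly_Mapping.lookup (geom_monomial (- u) \<rho>) \<nu> * L ([:u, 1:] ^ (size \<rho> - l))"
    if "\<rho> \<in> P" for \<rho>
  proof -
    have "size \<rho> - l \<le> N"
      using that size_le_sum_mset_partition[of \<rho>] by (simp add: P_def N_def)
    have "bmono_image a b c d \<rho> \<nu> z * Fel l f \<mu> \<rho> (moeb a b c d z)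
        = T \<rho> * Poly_Mapping.lookup (geom_monomial (- u) \<rho>) \<nu>
          * (\<Sum>j\<le>size \<rho> - l. of_nat ((size \<rho> - l) choose j) * u ^ (size \<rho> - l - j) * h j)"
      unfolding T_def h_def u_def by (rule bmono_image_times_Fel[OF det hol modf l \<mu> z])
    also have "(\<Sum>j\<le>size \<rho> - l. of_nat ((size \<rho> - l) choose j) * u ^ (size \<rho> - l - j) * h j)
        = L ([:u, 1:] ^ (size \<rho> - l))"
      unfolding L_def coeff_linear_power using \<open>size \<rho> - l \<le> N\<close>
      by (intro sum.mono_neutral_left) (auto simp: binomial_eq_0)
    finally show ?thesis .
  qed
  have "piD a b c d (Fel l f \<mu>) \<nu> z
      = (\<Sum>\<rho>\<in>P. T \<rho> * Poly_Mapping.lookup (geom_monomial (- u) \<rho>) \<nu> * L ([:u, 1:] ^ (size \<rho> - l)))"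
    unfolding piD_def P_def[symmetric] by (rule sum.cong) (simp_all add: summand)
  also have "\<dots> = L (\<Sum>\<rho>\<in>P. smult (T \<rho> * Poly_Mapping.lookup (geom_monomial (- u) \<rho>) \<nu>)
      ([:u, 1:] ^ (size \<rho> - l)))"
    unfolding L_def by (simp add: coeff_sum sum_distrib_left sum_distrib_right mult_ac sum.swap[of _ P])
  also have "(\<Sum>\<rho>\<in>P. smult (T \<rho> * Poly_Mapping.lookup (geom_monomial (- u) \<rho>) \<nu>) ([:u, 1:] ^ (size \<rho> - l)))
      = monom (T \<nu>) (size \<nu> - l)"
    using geom_monomial_binomial_identity[where \<nu> = \<nu> and \<mu> = \<mu> and x = "- u"] \<mu>(2)
    by (simp add: P_def T_def)
  also have "L (monom (T \<nu>) (size \<nu> - l)) = T \<nu> * h (size \<nu> - l)"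
    unfolding L_def by (simp add: N_def if_distrib[of "\<lambda>a. a * _"] cong: if_cong)
  also have "\<dots> = Fel l f \<mu> \<nu> z"
    by (simp add: Fel_eq[OF \<mu>] T_def h_def)
  finally show ?thesis .
qed

theorem mainTheorem12:
  fixes l :: nat and f :: "complex \<Rightarrow> complex" and \<mu> :: "nat multiset"
  assumes "1 \<le> l" and "modular_form (2 * l) f"
    and "is_partition \<mu>" and "size \<mu> = l"
  shows "\<forall>a b c d :: int. a * d - b * c = 1 \<longrightarrow>
           (\<forall>\<nu>. \<forall>z\<in>UHP.
              piD (of_int a) (of_int b) (of_int c) (of_int d) (Fel l f \<mu>) \<nu> z = Fel l f \<mu> \<nu> z)"
proof (intro allI impI ballI)
  fix a b c d :: int and \<nu> z
  assume det: "a * d - b * c = 1" and z: "z \<in> UHP"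
  have hol: "f holomorphic_on UHP"
    and modf: "\<And>w. w \<in> UHP \<Longrightarrow> f (moeb (of_int a) (of_int b) (of_int c) (of_int d) w)
      = (of_real (of_int c) * w + of_real (of_int d)) ^ (2 * l) * f w"
    using assms(2) det unfolding modular_form_def by auto
  have "(of_int a :: real) * of_int d - of_int b * of_int c = 1"
    using det by (metis of_int_1 of_int_diff of_int_mult)
  moreover have "0 < l"
    using assms(1) by simp
  ultimately show "piD (of_int a) (of_int b) (of_int c) (of_int d) (Fel l f \<mu>) \<nu> z = Fel l f \<mu> \<nu> z"
    using piD_Fel_eq[OF _ hol modf _ assms(3,4) z] by blast
qed

end
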